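(* Let $\mu=(p,q,r,s)\in\mathbb{C}^4$. There is a constant $m(\mu)>0$ such that for every $\phi\in\Phi_\mu$, if three regions $X,Y,Z$ meet at a vertex which is a sink (all three arrows assigned by $\phi$ on the edges at that vertex point towards it), then $\min\{|\phi(X)|,|\phi(Y)|,|\phi(Z)|\}\le m(\mu)$.
   Context: Let $\Sigma$ be a countably infinite simplicial tree, properly embedded in the plane, all of whose vertices have degree $3$. A complementary region is the closure of a connected component of the complement of $\Sigma$; $\Omega$ is the set of complementary regions, $E(\Sigma)$ the set of edges. Every edge $e$ is the intersection of exactly two regions $X,Y$, and its two endpoints lie on two further regions $Z,W$ respectively; write $e\leftrightarrow(X,Y;Z,W)$. Three regions meet at each vertex. Fix a coloring $\mathcal C:\Omega\cup E(\Sigma)\to\{1,2,3\}$ such that for every $e\leftrightarrow(X,Y;Z,W)$, $\mathcal C(e)=\mathcal C(Z)=\mathcal C(W)$ and $\mathcal C(e),\mathcal C(X),\mathcal C(Y)$ are pairwise distinct; $\Omega_i$, $E_i$ denote regions/edges of color $i$. For $\mu=(p,q,r,s)\in\mathbb{C}^4$, a $\mu$-Markoff map is $\phi:\Omega\to\mathbb{C}$ such that (i) at every vertex with regions $X\in\Omega_1,Y\in\Omega_2,Z\in\Omega_3$, $x^2+y^2+z^2+xyz=px+qy+rz+s$ where $x=\phi(X)$, etc.; (ii) for $e\in E_1$, $e\leftrightarrow(Y,Z;X,X')$: $\phi(X)+\phi(X')=p-\phi(Y)\phi(Z)$; for $e\in E_2$, $e\leftrightarrow(X,Z;Y,Y')$: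 $\phi(Y)+\phi(Y')=q-\phi(X)\phi(Z)$; for $e\in E_3$, $e\leftrightarrow(X,Y;Z,Z')$: $\phi(Z)+\phi(Z')=r-\phi(X)\phi(Y)$. $\Phi_\mu$ is the set of such maps. Arrows: given $\phi$ and an edge $e\leftrightarrow(X,Y;Z,W)$, orient $e$ towards its endpoint lying on $W$ if $|\phi(Z)|>|\phi(W)|$, towards its endpoint lying on $Z$ if $|\phi(Z)|<|\phi(W)|$, and arbitrarily (but fixed) if equal. *)

theory Defs
  imports Complex_Main "HOL-Library.Countable_Set"
begin

text \<open>Vertices are the
elements of the type 'v; E is the (symmetric, irreflexive) adjacency relation;
R v is the set of the three complementary regions meeting at the vertex v;
col is the colouring of the regions by 1,2,3.  For an edge {u,v}, the two
regions containing the edge are R u \<inter> R v, and the regions on which the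
endpoints u resp. v lie (but not containing the edge) are the unique elements
of R u - R v resp. R v - R u.\<close>

definition trivalent_tree :: "('v \<Rightarrow> 'v \<Rightarrow> bool) \<Rightarrow> bool" where
  "trivalent_tree E \<longleftrightarrow>
     countable (UNIV :: 'v set) \<and> infinite (UNIV :: 'v set) \<and>
     (\<forall>u v. E u v \<longrightarrow> E v u) \<and> (\<forall>v. \<not> E v v) \<and>
     (\<forall>v. finite {u. E v u} \<and> card {u. E v u} = 3) \<and>
     (\<forall>u v. E\<^sup>*\<^sup>* u v) \<and>
     (\<forall>u v. E u v \<longrightarrow> \<not> (\<lambda>a b. E a b \<and> {a, b} \<noteq> {u, v})\<^sup>*\<^sup>* u v)"

definition region_structure :: "('v \<Rightarrow> 'v \<Rightarrow> bool) \<Rightarrow> ('v \<Rightarrow> 'r set) \<Rightarrow> ('r \<Rightarrow> nat) \<Rightarrow> bool" where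
  "region_structure E R col \<longleftrightarrow>
     (\<forall>v. finite (R v) \<and> card (R v) = 3) \<and>
     (\<forall>u v. E u v \<longrightarrow> card (R u \<inter> R v) = 2) \<and>
     (\<forall>v u1 u2. E v u1 \<and> E v u2 \<and> u1 \<noteq> u2 \<longrightarrow> R v \<inter> R u1 \<noteq> R v \<inter> R u2) \<and>
     (\<forall>v. col ` R v = {1, 2, 3})"

definition colour_param :: "complex \<Rightarrow> complex \<Rightarrow> complex \<Rightarrow> nat \<Rightarrow> complex" where
  "colour_param p q r c = (if c = 1 then p else if c = 2 then q else r)"

text \<open>The edge relation for an edge {u,v}
with side regions X,Y and end regions Z (at u), W (at v): the colour of Z (= colour
of W = colour of the edge) selects the parameter.\<close>
definition markoff_map ::
  "('v \<Rightarrow> 'v \<Rightarrow> bool) \<Rightarrow> ('v \<Rightarrow> 'r set) \<Rightarrow> ('r \<Rightarrow> nat) \<Rightarrow>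
   complex \<Rightarrow> complex \<Rightarrow> complex \<Rightarrow> complex \<Rightarrow> ('r \<Rightarrow> complex) \<Rightarrow> bool" where
  "markoff_map E R col p q r s \<phi> \<longleftrightarrow>
     (\<forall>v X Y Z. X \<in> R v \<and> Y \<in> R v \<and> Z \<in> R v \<and> col X = 1 \<and> col Y = 2 \<and> col Z = 3 \<longrightarrow>
        (\<phi> X)\<^sup>2 + (\<phi> Y)\<^sup>2 + (\<phi> Z)\<^sup>2 + \<phi> X * \<phi> Y * \<phi> Z
          = p * \<phi> X + q * \<phi> Y + r * \<phi> Z + s) \<and>
     (\<forall>u v X Y Z W. E u v \<and> R u \<inter> R v = {X, Y} \<and> Z \<in> R u - R v \<and> W \<in> R v - R u \<longrightarrow>
        \<phi> Z + \<phi> W = colour_param p q r (col Z) - \<phi> X * \<phi> Y)"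

text \<open>An arrow assignment: Ori u v means the edge {u,v} is oriented from u towards v.
Each edge gets exactly one orientation, which points towards the endpoint whose
end region has strictly smaller modulus (ties arbitrary).\<close>
definition arrows ::
  "('v \<Rightarrow> 'v \<Rightarrow> bool) \<Rightarrow> ('v \<Rightarrow> 'r set) \<Rightarrow> ('r \<Rightarrow> complex) \<Rightarrow> ('v \<Rightarrow> 'v \<Rightarrow> bool) \<Rightarrow> bool" where
  "arrows E R \<phi> Ori \<longleftrightarrow>
     (\<forall>u v. Ori u v \<longrightarrow> E u v) \<and>
     (\<forall>u v. E u v \<longrightarrow> (Ori u v \<longleftrightarrow> \<not> Ori v u)) \<and>
     (\<forall>u v Z W. E u v \<and> Z \<in> R u - R v \<and> W \<in> R v - R u \<longrightarrow>
        (norm (\<phi> Z) > norm (\<phi> W) \<longrightarrow> Ori u v) \<and> (norm (\<phi> Z) < norm (\<phi> W) \<longrightarrow> Ori v u))"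

definition sink :: "('v \<Rightarrow> 'v \<Rightarrow> bool) \<Rightarrow> ('v \<Rightarrow> 'v \<Rightarrow> bool) \<Rightarrow> 'v \<Rightarrow> bool" where
  "sink E Ori v \<longleftrightarrow> (\<forall>u. E u v \<longrightarrow> Ori u v)"

end

theory Submission
  imports Defs
begin

text \<open>Let v be a sink with regions A, B, C carrying values a, b, c.  The edge at v whose
side regions are B and C ends in a region W with value w; the edge relation makes a and w
the two roots of the vertex relation read as a quadratic in a, so
a w = b^2 + c^2 - q_B b - q_C c - s.  As the edge points towards v, |a| <= |w|, hence
|a|^2 <= |b|^2 + |c|^2 + O(|b| + |c| + 1).  If |a| is the largest value and |b| >= |c|,
this gives |a| = O(|b|), while the vertex relation gives |a| |b| |c| = O(|a|^2); together
|b| |c| = O(|b|), which bounds |c|.\<close>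

lemma markoff_real_bound_ordered:
  fixes t u w K :: real
  assumes K: "1 \<le> K" and ut: "u \<le> t" and wt: "w \<le> t" and wu: "w \<le> u" and w0: "0 \<le> w"
    and sq: "t\<^sup>2 \<le> u\<^sup>2 + w\<^sup>2 + K * (u + w + 1)"
    and prod: "t * u * w \<le> t\<^sup>2 + u\<^sup>2 + w\<^sup>2 + K * (t + u + w + 1)"
  shows "w \<le> 6 + 13 * K"
proof (cases "u < 1")
  case True
  then show ?thesis using wu K by linarith
next
  case False
  then have u1: "1 \<le> u" by simp
  define c where "c = 2 + 3 * K" \<comment> \<open>\<open>sq\<close> yields \<open>t \<le> c * u\<close>, which turns \<open>prod\<close> into a bound on \<open>w\<close>\<close>
  have c1: "1 \<le> c" using K by (simp add: c_def)
  have "t\<^sup>2 \<le> u\<^sup>2 + u\<^sup>2 + K * (u\<^sup>2 + u\<^sup>2 + u\<^sup>2)"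
  proof -
    have "u \<le> u\<^sup>2" using u1 by (simp add: power2_eq_square)
    moreover have "w\<^sup>2 \<le> u\<^sup>2" using wu w0 by (simp add: power_mono)
    moreover have "1 \<le> u\<^sup>2" using u1 by (simp add: one_le_power)
    ultimately have "K * (u + w + 1) \<le> K * (u\<^sup>2 + u\<^sup>2 + u\<^sup>2)"
      using wu K by (intro mult_left_mono) auto
    then show ?thesis using sq \<open>w\<^sup>2 \<le> u\<^sup>2\<close> by linarith
  qed
  also have "\<dots> = c * u\<^sup>2" by (simp add: c_def algebra_simps)
  also have "\<dots> \<le> (c * c) * u\<^sup>2"
    using mult_left_mono[OF c1, of c] c1 by (intro mult_right_mono) simp_all
  also have "\<dots> = (c * u)\<^sup>2" by (simp add: power2_eq_square)
  finally have "t\<^sup>2 \<le> (c * u)\<^sup>2" .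
  moreover have "0 \<le> c * u" using c1 u1 by simp
  ultimately have "t \<le> c * u" by (rule power2_le_imp_le)
  have "t * (u * w) \<le> t * (3 * t + 4 * K)"
  proof -
    have "1 \<le> t" using u1 ut by linarith
    have "u\<^sup>2 \<le> t\<^sup>2" "w\<^sup>2 \<le> t\<^sup>2"
      using ut wt u1 w0 by (simp_all add: power_mono)
    moreover have "K * (t + u + w + 1) \<le> K * (4 * t)"
      using ut wt \<open>1 \<le> t\<close> K by (intro mult_left_mono) auto
    ultimately have "t\<^sup>2 + u\<^sup>2 + w\<^sup>2 + K * (t + u + w + 1) \<le> 3 * t\<^sup>2 + 4 * K * t"
      by linarith
    then show ?thesis using prod by (simp add: algebra_simps power2_eq_square)
  qed
  then have "u * w \<le> 3 * t + 4 * K" using u1 ut by simp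
  also have "\<dots> \<le> u * (6 + 13 * K)"
  proof -
    have "4 * K \<le> 4 * K * u" using u1 K by simp
    then show ?thesis using \<open>t \<le> c * u\<close> by (simp add: c_def algebra_simps)
  qed
  finally show ?thesis using u1 by simp
qed

lemma markoff_real_bound:
  fixes t u w K :: real
  assumes K: "1 \<le> K" and "u \<le> t" "w \<le> t" "0 \<le> u" "0 \<le> w"
    and sq: "t\<^sup>2 \<le> u\<^sup>2 + w\<^sup>2 + K * (u + w + 1)"
    and prod: "t * u * w \<le> t\<^sup>2 + u\<^sup>2 + w\<^sup>2 + K * (t + u + w + 1)"
  shows "min u w \<le> 6 + 13 * K"
proof (cases "w \<le> u")
  case True
  then show ?thesis using markoff_real_bound_ordered[OF assms(1-3) True assms(5) sq prod] by simp
next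
  case False
  have "t\<^sup>2 \<le> w\<^sup>2 + u\<^sup>2 + K * (w + u + 1)" "t * w * u \<le> t\<^sup>2 + w\<^sup>2 + u\<^sup>2 + K * (t + w + u + 1)"
    using sq prod by (simp_all add: ac_simps)
  then show ?thesis using markoff_real_bound_ordered[OF K assms(3,2) _ assms(4)] False by simp
qed

lemma markoff_vieta:
  fixes a b c w P Q S s :: "'a::comm_ring_1"
  assumes "a + w = P - b * c" and "a\<^sup>2 + b\<^sup>2 + c\<^sup>2 + a * b * c = P * a + Q * b + S * c + s"
  shows "a * w = b\<^sup>2 + c\<^sup>2 - Q * b - S * c - s"
proof -
  have P: "P = a + w + b * c" using assms(1) by (simp add: algebra_simps)
  have "a * w = P * a - a * b * c - a\<^sup>2" unfolding P by (simp add: algebra_simps power2_eq_square)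
  also have "\<dots> = b\<^sup>2 + c\<^sup>2 - Q * b - S * c - s" using assms(2) by (simp add: algebra_simps eq_diff_eq)
  finally show ?thesis .
qed

lemma norm_vieta_le:
  fixes b c Q S s :: complex
  assumes "norm Q \<le> K" "norm S \<le> K" "norm s \<le> K"
  shows "norm (b\<^sup>2 + c\<^sup>2 - Q * b - S * c - s) \<le> (norm b)\<^sup>2 + (norm c)\<^sup>2 + K * (norm b + norm c + 1)"
proof -
  have "norm (b\<^sup>2 + c\<^sup>2 - Q * b - S * c - s) \<le> norm (b\<^sup>2) + norm (c\<^sup>2) + norm (Q * b) + norm (S * c) + norm s"
    by (smt (verit) norm_triangle_ineq norm_triangle_ineq4)
  moreover have "norm (Q * b) \<le> K * norm b" "norm (S * c) \<le> K * norm c"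
    using assms by (simp_all add: norm_mult mult_right_mono)
  ultimately show ?thesis using assms(3) by (simp add: norm_power algebra_simps)
qed

lemma norm_markoff_product_le:
  fixes a b c P Q S s :: complex
  assumes "a\<^sup>2 + b\<^sup>2 + c\<^sup>2 + a * b * c = P * a + Q * b + S * c + s"
    and "norm P \<le> K" "norm Q \<le> K" "norm S \<le> K" "norm s \<le> K"
  shows "norm a * norm b * norm c \<le> (norm a)\<^sup>2 + (norm b)\<^sup>2 + (norm c)\<^sup>2 + K * (norm a + norm b + norm c + 1)"
proof -
  have "a * b * c = P * a + Q * b + S * c + s - a\<^sup>2 - b\<^sup>2 - c\<^sup>2"
    using assms(1) by (simp add: algebra_simps eq_diff_eq)
  then have "norm (a * b * c) \<le> norm (P * a) + norm (Q * b) + norm (S * c) + norm s + norm (a\<^sup>2) + norm (b\<^sup>2) + norm (c\<^sup>2)"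
    by (smt (verit) norm_triangle_ineq norm_triangle_ineq4)
  moreover have "norm (P * a) \<le> K * norm a" "norm (Q * b) \<le> K * norm b" "norm (S * c) \<le> K * norm c"
    using assms by (simp_all add: norm_mult mult_right_mono)
  ultimately show ?thesis using assms(5) by (simp add: norm_mult norm_power algebra_simps)
qed

lemma regions_at_vertex_distinct:
  assumes "region_structure E R col" and "R v = {A, B, C}"
  shows "A \<noteq> B" "A \<noteq> C" "B \<noteq> C"
proof -
  have "card {A, B, C} = 3" using assms unfolding region_structure_def by metis
  then show "A \<noteq> B" "A \<noteq> C" "B \<noteq> C" by (auto simp: card_insert_if split: if_splits)
qed

lemma side_regions_at_vertex:
  assumes tt: "trivalent_tree E" and rs: "region_structure E R col"
  shows "(\<lambda>u. R v \<inter> R u) ` {u. E v u} = {S. S \<subseteq> R v \<and> card S = 2}"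
proof -
  let ?T = "{S. S \<subseteq> R v \<and> card S = 2}"
  have fin: "finite (R v)" "card (R v) = 3" and nb: "card {u. E v u} = 3"
    using rs tt by (simp_all add: region_structure_def trivalent_tree_def)
  have "inj_on (\<lambda>u. R v \<inter> R u) {u. E v u}"
    using rs unfolding inj_on_def region_structure_def by blast
  then have "card ((\<lambda>u. R v \<inter> R u) ` {u. E v u}) = 3" using nb by (simp add: card_image)
  moreover have "card ?T = 3" using n_subsets[OF fin(1), of 2] fin(2) by (simp add: numeral_3_eq_3 numeral_2_eq_2)
  moreover have "(\<lambda>u. R v \<inter> R u) ` {u. E v u} \<subseteq> ?T"
    using rs by (auto simp: region_structure_def)
  ultimately show ?thesis using fin(1) by (simp add: card_subset_eq)
qed

lemma edge_with_side_regions: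
  assumes tt: "trivalent_tree E" and rs: "region_structure E R col" and Rv: "R v = {A, B, C}"
  obtains u W where "E v u" "R v \<inter> R u = {B, C}" "A \<in> R v - R u" "W \<in> R u - R v"
proof -
  note dist = regions_at_vertex_distinct[OF rs Rv]
  then have "{B, C} \<in> (\<lambda>u. R v \<inter> R u) ` {u. E v u}"
    unfolding side_regions_at_vertex[OF tt rs] using Rv by auto
  then obtain u where u: "E v u" "R v \<inter> R u = {B, C}" by auto
  have "\<not> R u \<subseteq> R v"
  proof
    assume "R u \<subseteq> R v"
    then have "R u = {B, C}" using u(2) by blast
    moreover have "card (R u) = 3" using rs unfolding region_structure_def by blast
    ultimately show False using dist(3) by simp
  qed
  then obtain W where "W \<in> R u - R v" by blast
  moreover have "A \<in> R v - R u" using u(2) Rv dist by blast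
  ultimately show thesis using that u by blast
qed

lemma markoff_vertex_relation:
  assumes mm: "markoff_map E R col p q r s \<phi>" and rs: "region_structure E R col"
    and Rv: "R v = {A, B, C}"
  shows "(\<phi> A)\<^sup>2 + (\<phi> B)\<^sup>2 + (\<phi> C)\<^sup>2 + \<phi> A * \<phi> B * \<phi> C
    = colour_param p q r (col A) * \<phi> A + colour_param p q r (col B) * \<phi> B
      + colour_param p q r (col C) * \<phi> C + s"
proof -
  note dist = regions_at_vertex_distinct[OF rs Rv]
  have cols: "col ` {A, B, C} = {1, 2, 3}" using rs Rv unfolding region_structure_def by metis
  have "1 \<in> col ` {A, B, C}" "2 \<in> col ` {A, B, C}" "3 \<in> col ` {A, B, C}"
    unfolding cols by simp_all
  then obtain X1 X2 X3 where X: "X1 \<in> {A, B, C}" "X2 \<in> {A, B, C}" "X3 \<in> {A, B, C}"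
    and c: "col X1 = 1" "col X2 = 2" "col X3 = 3"
    by (elim imageE) (metis that)
  have "(\<phi> X1)\<^sup>2 + (\<phi> X2)\<^sup>2 + (\<phi> X3)\<^sup>2 + \<phi> X1 * \<phi> X2 * \<phi> X3
      = p * \<phi> X1 + q * \<phi> X2 + r * \<phi> X3 + s"
    using mm[unfolded markoff_map_def, THEN conjunct1, rule_format, of X1 v X2 X3] X c Rv by simp
  then show ?thesis using X c dist by (auto simp: colour_param_def algebra_simps)
qed

lemma sink_norm_le:
  assumes arr: "arrows E R \<phi> Ori" and sk: "sink E Ori v" and uv: "E u v"
    and Z: "Z \<in> R v - R u" and W: "W \<in> R u - R v"
  shows "norm (\<phi> Z) \<le> norm (\<phi> W)"
proof (rule ccontr)
  assume "\<not> ?thesis"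
  then have "Ori v u"
    using arr[unfolded arrows_def, THEN conjunct2, THEN conjunct2, rule_format, OF conjI[OF uv conjI[OF W Z]]]
    by simp
  moreover have "Ori u v" using sk uv unfolding sink_def by blast
  ultimately show False using arr uv unfolding arrows_def by blast
qed

lemma sink_norm_sq_le:
  assumes tt: "trivalent_tree E" and rs: "region_structure E R col"
    and mm: "markoff_map E R col p q r s \<phi>" and arr: "arrows E R \<phi> Ori"
    and sk: "sink E Ori v" and Rv: "R v = {A, B, C}"
    and Kc: "\<And>c. norm (colour_param p q r c) \<le> K" and Ks: "norm s \<le> K"
  shows "(norm (\<phi> A))\<^sup>2 \<le> (norm (\<phi> B))\<^sup>2 + (norm (\<phi> C))\<^sup>2 + K * (norm (\<phi> B) + norm (\<phi> C) + 1)"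
proof -
  obtain u W where u: "E v u" "R v \<inter> R u = {B, C}" "A \<in> R v - R u" "W \<in> R u - R v"
    using edge_with_side_regions[OF tt rs Rv] .
  have "\<phi> A + \<phi> W = colour_param p q r (col A) - \<phi> B * \<phi> C"
    using mm[unfolded markoff_map_def, THEN conjunct2, rule_format, of v u B C A W] u by simp
  then have vieta: "\<phi> A * \<phi> W = (\<phi> B)\<^sup>2 + (\<phi> C)\<^sup>2 - colour_param p q r (col B) * \<phi> B
      - colour_param p q r (col C) * \<phi> C - s"
    using markoff_vertex_relation[OF mm rs Rv] by (rule markoff_vieta)
  have "E u v" using tt u(1) unfolding trivalent_tree_def by blast
  then have "norm (\<phi> A) \<le> norm (\<phi> W)" using sink_norm_le[OF arr sk _ u(3,4)] by blast
  then have "(norm (\<phi> A))\<^sup>2 \<le> norm (\<phi> A * \<phi> W)"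
    by (simp add: norm_mult power2_eq_square mult_left_mono)
  also have "\<dots> \<le> (norm (\<phi> B))\<^sup>2 + (norm (\<phi> C))\<^sup>2 + K * (norm (\<phi> B) + norm (\<phi> C) + 1)"
    unfolding vieta by (intro norm_vieta_le Kc Ks)
  finally show ?thesis .
qed

lemma sink_min_norm_le:
  assumes tt: "trivalent_tree E" and rs: "region_structure E R col"
    and mm: "markoff_map E R col p q r s \<phi>" and arr: "arrows E R \<phi> Ori"
    and sk: "sink E Ori v" and Rv: "R v = {A, B, C}"
    and K: "1 \<le> K" and Kc: "\<And>c. norm (colour_param p q r c) \<le> K" and Ks: "norm s \<le> K"
    and BA: "norm (\<phi> B) \<le> norm (\<phi> A)" and CA: "norm (\<phi> C) \<le> norm (\<phi> A)"
  shows "min (norm (\<phi> B)) (norm (\<phi> C)) \<le> 6 + 13 * K"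
proof (rule markoff_real_bound[OF K BA CA norm_ge_zero norm_ge_zero])
  show "(norm (\<phi> A))\<^sup>2 \<le> (norm (\<phi> B))\<^sup>2 + (norm (\<phi> C))\<^sup>2 + K * (norm (\<phi> B) + norm (\<phi> C) + 1)"
    by (rule sink_norm_sq_le[OF tt rs mm arr sk Rv Kc Ks])
  show "norm (\<phi> A) * norm (\<phi> B) * norm (\<phi> C) \<le> (norm (\<phi> A))\<^sup>2 + (norm (\<phi> B))\<^sup>2
      + (norm (\<phi> C))\<^sup>2 + K * (norm (\<phi> A) + norm (\<phi> B) + norm (\<phi> C) + 1)"
    using markoff_vertex_relation[OF mm rs Rv] by (rule norm_markoff_product_le) (intro Kc Ks)+
qed

theorem lemma3p5:
  fixes E :: "'v \<Rightarrow> 'v \<Rightarrow> bool" and R :: "'v \<Rightarrow> 'r set" and col :: "'r \<Rightarrow> nat"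
    and p q r s :: complex
  assumes "trivalent_tree E" and "region_structure E R col"
  shows "\<exists>m>0. \<forall>\<phi> Ori v X Y Z.
           markoff_map E R col p q r s \<phi> \<and> arrows E R \<phi> Ori \<and> sink E Ori v \<and> R v = {X, Y, Z}
           \<longrightarrow> Min {norm (\<phi> X), norm (\<phi> Y), norm (\<phi> Z)} \<le> m"
proof (intro exI conjI allI impI)
  define K where "K = norm p + norm q + norm r + norm s + 1"
  have K: "1 \<le> K" and Ks: "norm s \<le> K" by (simp_all add: K_def)
  have Kc: "norm (colour_param p q r c) \<le> K" for c by (simp add: K_def colour_param_def)
  show "0 < 6 + 13 * K" using K by simp
  fix \<phi> Ori v X Y Z
  assume "markoff_map E R col p q r s \<phi> \<and> arrows E R \<phi> Ori \<and> sink E Ori v \<and> R v = {X, Y, Z}"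
  then have mm: "markoff_map E R col p q r s \<phi>" and arr: "arrows E R \<phi> Ori"
    and sk: "sink E Ori v" and Rv: "R v = {X, Y, Z}" by blast+
  note bound = sink_min_norm_le[OF assms mm arr sk _ K Kc Ks]
  have "R v = {Y, X, Z}" "R v = {Z, X, Y}" using Rv by auto
  then show "Min {norm (\<phi> X), norm (\<phi> Y), norm (\<phi> Z)} \<le> 6 + 13 * K"
    using bound[OF Rv] bound[of Y X Z] bound[of Z X Y] by (simp add: min_le_iff_disj) linarith
qed

end
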